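(* Let $\mu>0$. Define $$N'=\sup_{\tau\in\mathcal{R}_{part,conv,rate}}\ \inf_{\alpha\in(0,\infty)}\varphi(\tau,\alpha),\qquad V=\sup_{\tau\in\mathcal{R}_{part,conv,rate}}\ \inf_{\alpha\in(0,\infty)}\ \inf_{\lambda\ge0}L_1(\tau,\lambda,\alpha),$$ where for $\tau=((R_p,R_c),\Sigma_p,\Sigma_{c,p},Q,\Sigma_{c,c})$, $\varphi(\tau,\alpha)=\mu R_p+R_c$ if $\mathrm{Tr}(\Sigma_p)+\alpha\mathrm{Tr}(\Sigma_{c,p})+\alpha\mathrm{Tr}(\Sigma_{c,c})\le P_p+\alpha P_c$ and $\varphi(\tau,\alpha)=-\infty$ otherwise, and $L_1(\tau,\lambda,\alpha)=\mu R_p+R_c-\lambda\big(\mathrm{Tr}(\Sigma_p)+\alpha\mathrm{Tr}(\Sigma_{c,p})+\alpha\mathrm{Tr}(\Sigma_{c,c})-P_p-\alpha P_c\big)$. Then $N'=V$.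
   Context: Fixed complex matrices $H_{p,p}\in\mathbb{C}^{n_{p,r}\times n_{p,t}}$, $H_{c,p}\in\mathbb{C}^{n_{p,r}\times n_{c,t}}$, $H_{c,c}\in\mathbb{C}^{n_{c,r}\times n_{c,t}}$, powers $P_p,P_c>0$, $G=[H_{p,p}\ \ H_{c,p}]$. $\mathcal{R}_{part,conv,rate}$ is the set of tuples $((R_p,R_c),\Sigma_p,\Sigma_{c,p},Q,\Sigma_{c,c})$ with $R_p,R_c\ge0$, $\Sigma_p\succeq0$ ($n_{p,t}\times n_{p,t}$), $\Sigma_{c,p},\Sigma_{c,c}\succeq0$ ($n_{c,t}\times n_{c,t}$), $Q\in\mathbb{C}^{n_{p,t}\times n_{c,t}}$, $Q_p=\begin{pmatrix}\Sigma_p&Q\\Q^\dagger&\Sigma_{c,p}\end{pmatrix}\succeq0$, $R_p\le\log|I+GQ_pG^\dagger+H_{c,p}\Sigma_{c,c}H_{c,p}^\dagger|-\log|I+H_{c,p}\Sigma_{c,c}H_{c,p}^\dagger|$, $R_c\le\log|I+H_{c,c}\Sigma_{c,c}H_{c,c}^\dagger|$. (In the paper $\alpha$ ranges over the compactification $\mathbb{R}^+\cup\{0,\infty\}$; here it is taken in $(0,\infty)$ where all expressions are defined.) *)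

theory Defs
  imports "Jordan_Normal_Form.Matrix" "Jordan_Normal_Form.Determinant" "HOL-Library.Extended_Real"
begin

definition ctrans :: "complex mat \<Rightarrow> complex mat" where
  "ctrans A = mat (dim_col A) (dim_row A) (\<lambda>(i,j). cnj (A $$ (j,i)))"

definition tr :: "complex mat \<Rightarrow> complex" where
  "tr A = (\<Sum>i<dim_row A. A $$ (i,i))"

definition psd :: "nat \<Rightarrow> complex mat \<Rightarrow> bool" where
  "psd n A \<longleftrightarrow> A \<in> carrier_mat n n \<and> ctrans A = A \<and>
     (\<forall>x \<in> carrier_vec n. Re (\<Sum>i<n. cnj (x $ i) * (A *\<^sub>v x) $ i) \<ge> 0)"

(* log-determinant log|M| for the (positive definite) matrices occurring below *)
definition logdet :: "complex mat \<Rightarrow> real" where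
  "logdet M = ln (cmod (det M))"

type_synonym tuple = "(real \<times> real) \<times> complex mat \<times> complex mat \<times> complex mat \<times> complex mat"

definition Rpcr ::
  "nat \<Rightarrow> nat \<Rightarrow> nat \<Rightarrow> nat \<Rightarrow> complex mat \<Rightarrow> complex mat \<Rightarrow> complex mat \<Rightarrow> tuple set" where
  "Rpcr npt nct npr ncr Hpp Hcp Hcc =
    {((Rp,Rc),Sp,Scp,Q,Scc).
       Rp \<ge> 0 \<and> Rc \<ge> 0 \<and> psd npt Sp \<and> psd nct Scp \<and> psd nct Scc \<and>
       Q \<in> carrier_mat npt nct \<and>
       psd (npt + nct) (four_block_mat Sp Q (ctrans Q) Scp) \<and>
       (let G = four_block_mat Hpp Hcp (0\<^sub>m 0 npt) (0\<^sub>m 0 nct);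
            Qp = four_block_mat Sp Q (ctrans Q) Scp;
            Icp = 1\<^sub>m npr + Hcp * Scc * ctrans Hcp
        in Rp \<le> logdet (Icp + G * Qp * ctrans G) - logdet Icp) \<and>
       Rc \<le> logdet (1\<^sub>m ncr + Hcc * Scc * ctrans Hcc)}"

definition powcost :: "tuple \<Rightarrow> real \<Rightarrow> real \<Rightarrow> real \<Rightarrow> real" where
  "powcost \<tau> \<alpha> Pp Pc = (case \<tau> of ((Rp,Rc),Sp,Scp,Q,Scc) \<Rightarrow>
     Re (tr Sp) + \<alpha> * Re (tr Scp) + \<alpha> * Re (tr Scc) - Pp - \<alpha> * Pc)"

definition phi :: "real \<Rightarrow> real \<Rightarrow> real \<Rightarrow> tuple \<Rightarrow> real \<Rightarrow> ereal" where
  "phi \<mu> Pp Pc \<tau> \<alpha> = (case \<tau> of ((Rp,Rc),_) \<Rightarrow>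
     if powcost \<tau> \<alpha> Pp Pc \<le> 0 then ereal (\<mu> * Rp + Rc) else -\<infinity>)"

definition L1 :: "real \<Rightarrow> real \<Rightarrow> real \<Rightarrow> tuple \<Rightarrow> real \<Rightarrow> real \<Rightarrow> real" where
  "L1 \<mu> Pp Pc \<tau> lam \<alpha> = (case \<tau> of ((Rp,Rc),_) \<Rightarrow>
     \<mu> * Rp + Rc - lam * powcost \<tau> \<alpha> Pp Pc)"

end

theory Submission
  imports Defs
begin

(*
  The identity N' = V holds pointwise, not only after taking sup and inf.
  For a single linear constraint g \<le> 0 with objective value a, the
  Lagrangian a - lam * g, minimised over multipliers lam \<ge> 0, is the
  penalised objective: it equals a when the constraint holds (take lam = 0,
  and every lam \<ge> 0 only increases the value) and -\<infinity> when it fails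
  (lam * g grows without bound).  Applied to a = \<mu> R_p + R_c and
  g = powcost, this shows that inf over lam of L1 equals phi for every
  tuple and every \<alpha>; the theorem then follows by rewriting under the
  outer INF and SUP.
*)

lemma inf_lagrangian_feasible:
  fixes a g :: real
  assumes "g \<le> 0"
  shows "(INF lam\<in>{0..}. ereal (a - lam * g)) = ereal a"
proof (rule antisym)
  show "(INF lam\<in>{0..}. ereal (a - lam * g)) \<le> ereal a"
    using INF_lower[of 0 "{0..}" "\<lambda>lam. ereal (a - lam * g)"] by simp
  show "ereal a \<le> (INF lam\<in>{0..}. ereal (a - lam * g))"
  proof (rule INF_greatest)
    fix lam :: real
    assume "lam \<in> {0..}"
    then have "lam * g \<le> 0"
      using assms by (simp add: mult_nonneg_nonpos)
    then show "ereal a \<le> ereal (a - lam * g)" by simp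
  qed
qed

lemma inf_lagrangian_infeasible:
  fixes a g :: real
  assumes "g > 0"
  shows "(INF lam\<in>{0..}. ereal (a - lam * g)) = -\<infinity>"
proof (rule ereal_bot)
  fix B :: real
  define lam where "lam = (\<bar>a\<bar> + \<bar>B\<bar>) / g"
  have lam_nonneg: "lam \<in> {0..}"
    using assms by (simp add: lam_def)
  have "lam * g = \<bar>a\<bar> + \<bar>B\<bar>"
    using assms by (simp add: lam_def)
  then have "ereal (a - lam * g) \<le> ereal B" by simp
  then show "(INF l\<in>{0..}. ereal (a - l * g)) \<le> ereal B"
    using INF_lower[OF lam_nonneg, of "\<lambda>l. ereal (a - l * g)"] by (rule order_trans[rotated])
qed

lemma inf_lagrangian:
  fixes a g :: real
  shows "(INF lam\<in>{0..}. ereal (a - lam * g)) = (if g \<le> 0 then ereal a else -\<infinity>)"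
  using inf_lagrangian_feasible[of g a] inf_lagrangian_infeasible[of g a] by simp

lemma inf_L1_eq_phi:
  "(INF lam\<in>{0..}. ereal (L1 \<mu> Pp Pc \<tau> lam \<alpha>)) = phi \<mu> Pp Pc \<tau> \<alpha>"
proof -
  obtain Rp Rc r where \<tau>: "\<tau> = ((Rp, Rc), r)"
    by (metis prod.exhaust)
  show ?thesis
    unfolding L1_def phi_def \<tau>
    using inf_lagrangian[of "\<mu> * Rp + Rc" "powcost ((Rp, Rc), r) \<alpha> Pp Pc"] by simp
qed

text \<open>The theorem: both sides agree termwise by the previous lemma.\<close>

theorem lemma6p4:
  fixes npt nct npr ncr :: nat and Hpp Hcp Hcc :: "complex mat" and Pp Pc \<mu> :: real
  assumes "Hpp \<in> carrier_mat npr npt" "Hcp \<in> carrier_mat npr nct" "Hcc \<in> carrier_mat ncr nct"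
    and "Pp > 0" "Pc > 0" "\<mu> > 0"
  shows "(SUP \<tau>\<in>Rpcr npt nct npr ncr Hpp Hcp Hcc. INF \<alpha>\<in>{0<..}. phi \<mu> Pp Pc \<tau> \<alpha>)
       = (SUP \<tau>\<in>Rpcr npt nct npr ncr Hpp Hcp Hcc. INF \<alpha>\<in>{0<..}. INF lam\<in>{0..}.
            ereal (L1 \<mu> Pp Pc \<tau> lam \<alpha>))"
  by (simp only: inf_L1_eq_phi)

end
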